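(* Let $P$ be a finite sequence of nonnegative integers. The following are equivalent: (i) $P$ is loop graphic; (ii) the pair $(P,P)$ is bigraphic; (iii) $P$ is mirror bigraphic.
   Context: An $l$-graph is a graph without multiple edges and with at most one loop attached at each vertex; the degree of a vertex is the number of edges incident with it, a loop contributing exactly one to the degree. A sequence $P$ is loop graphic if there is an $l$-graph whose vertex degrees are exactly the elements of $P$. For sequences $P,Q$ of nonnegative integers, the pair $(P,Q)$ is bigraphic if there is a bipartite graph $G=(V_1\cup V_2,E)$ (with stable sets $V_1,V_2$) whose vertices in $V_1$ have degrees equal to the elements of $P$ and whose vertices in $V_2$ have degrees equal to the elements of $Q$; such $G$ realizes $(P,Q)$. A bipartite graph $G=(V_1\cup V_2,E)$ is mirror if there is a bijection $\varphi:V_1\to V_2$ with $u\varphi(v)\in E \iff \varphi(u)v\in E$ for all $u,v\in V_1$. A sequence $P$ is mirror bigraphic if $(P,P)$ is bigraphic and some mirror bipartite graph realizes $(P,P)$. *)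

theory Defs
  imports Main
begin

text \<open>l-graph on vertex set {0..<n}: a symmetric adjacency relation E with
  E i i meaning that vertex i carries a loop (at most one loop per vertex,
  no multiple edges are automatic for a relation). The degree of i is the number
  of neighbours j (including i itself if there is a loop), so a loop
  contributes exactly one.\<close>

definition lgraph :: "nat \<Rightarrow> (nat \<Rightarrow> nat \<Rightarrow> bool) \<Rightarrow> bool" where
  "lgraph n E \<longleftrightarrow> (\<forall>i j. E i j \<longrightarrow> i < n \<and> j < n) \<and> (\<forall>i j. E i j \<longrightarrow> E j i)"

definition ldeg :: "nat \<Rightarrow> (nat \<Rightarrow> nat \<Rightarrow> bool) \<Rightarrow> nat \<Rightarrow> nat" where
  "ldeg n E i = card {j. j < n \<and> E i j}"

definition loop_graphic :: "nat list \<Rightarrow> bool" where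
  "loop_graphic P \<longleftrightarrow>
     (\<exists>E. lgraph (length P) E \<and> (\<forall>i < length P. ldeg (length P) E i = P ! i))"

text \<open>Bipartite graph with stable sets V1 = {0..<m} (left) and V2 = {0..<k}
  (right), given by B i j meaning left vertex i is adjacent to right vertex j.\<close>

definition realizes :: "(nat \<Rightarrow> nat \<Rightarrow> bool) \<Rightarrow> nat list \<Rightarrow> nat list \<Rightarrow> bool" where
  "realizes B P Q \<longleftrightarrow>
     (\<forall>i j. B i j \<longrightarrow> i < length P \<and> j < length Q) \<and>
     (\<forall>i < length P. card {j. j < length Q \<and> B i j} = P ! i) \<and>
     (\<forall>j < length Q. card {i. i < length P \<and> B i j} = Q ! j)"

definition bigraphic :: "nat list \<Rightarrow> nat list \<Rightarrow> bool" where
  "bigraphic P Q \<longleftrightarrow> (\<exists>B. realizes B P Q)"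

definition mirror :: "nat \<Rightarrow> nat \<Rightarrow> (nat \<Rightarrow> nat \<Rightarrow> bool) \<Rightarrow> bool" where
  "mirror m k B \<longleftrightarrow> (\<exists>\<phi>. bij_betw \<phi> {0..<m} {0..<k} \<and>
      (\<forall>u < m. \<forall>v < m. B u (\<phi> v) \<longleftrightarrow> B v (\<phi> u)))"

definition mirror_bigraphic :: "nat list \<Rightarrow> bool" where
  "mirror_bigraphic P \<longleftrightarrow> bigraphic P P \<and>
     (\<exists>B. realizes B P P \<and> mirror (length P) (length P) B)"

end

theory Submission
  imports Defs
begin

text \<open>Loop-graphic sequences are exactly the degree sequences of symmetric realizations of
  \<open>(P, P)\<close>, and a symmetric realization is mirror via the identity, so everything reduces to
  showing that a realization of \<open>(P, P)\<close> with the fewest asymmetric pairs is symmetric.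
  Read such a realization \<open>B\<close> as a digraph and call \<open>x \<rightarrow> y\<close> an arc if \<open>B x y\<close> but not \<open>B y x\<close>.
  Equal row and column sums make every arc continue. A 2-switch removes every directed triangle
  and every directed path \<open>a \<rightarrow> b \<rightarrow> c \<rightarrow> d\<close> without arc \<open>a \<rightarrow> d\<close>, each time decreasing the
  number of asymmetric pairs. Hence in a minimal realization walks of odd length are closed
  by an arc, and following arcs around the finite vertex set produces an arc pointing
  backwards along an arc, which is impossible.\<close>

lemma realizes_bounded: "realizes B P Q \<Longrightarrow> B i j \<Longrightarrow> i < length P \<and> j < length Q"
  unfolding realizes_def by blast

lemma loop_graphic_iff_symmetric_realization:
  "loop_graphic P \<longleftrightarrow> (\<exists>B. realizes B P P \<and> (\<forall>x y. B x y = B y x))"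
proof
  assume "loop_graphic P"
  then obtain E where E: "lgraph (length P) E" "\<forall>i < length P. ldeg (length P) E i = P ! i"
    unfolding loop_graphic_def by blast
  then have sym: "\<forall>x y. E x y = E y x" unfolding lgraph_def by blast
  then have "{i. i < length P \<and> E i j} = {j'. j' < length P \<and> E j j'}" for j by blast
  with E have "realizes E P P" unfolding lgraph_def ldeg_def realizes_def by auto
  with sym show "\<exists>B. realizes B P P \<and> (\<forall>x y. B x y = B y x)" by blast
next
  assume "\<exists>B. realizes B P P \<and> (\<forall>x y. B x y = B y x)"
  then obtain B where "realizes B P P" "\<forall>x y. B x y = B y x" by blast
  then have "lgraph (length P) B \<and> (\<forall>i < length P. ldeg (length P) B i = P ! i)"
    unfolding lgraph_def ldeg_def realizes_def by blast
  then show "loop_graphic P" unfolding loop_graphic_def by blast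
qed

subsection \<open>2-switches\<close>

definition switch :: "(nat \<Rightarrow> nat \<Rightarrow> bool) \<Rightarrow> nat \<Rightarrow> nat \<Rightarrow> nat \<Rightarrow> nat \<Rightarrow> nat \<Rightarrow> nat \<Rightarrow> bool" where
  "switch B r1 r2 c1 c2 = (\<lambda>x y.
     if (x = r1 \<and> y = c1) \<or> (x = r2 \<and> y = c2) then False
     else if (x = r1 \<and> y = c2) \<or> (x = r2 \<and> y = c1) then True
     else B x y)"

lemma switch_transpose:
  "switch (\<lambda>x y. B y x) c1 c2 r1 r2 j i = switch B r1 r2 c1 c2 i j"
  unfolding switch_def by (cases "i = r1"; cases "i = r2"; simp)

lemma card_insert_Diff_swap:
  assumes "finite S" "a \<in> S" "b \<notin> S"
  shows "card (insert b (S - {a})) = card S"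
proof -
  have "card S > 0" using assms by (auto simp: card_gt_0_iff)
  then show ?thesis using assms by (simp add: card_Diff_singleton)
qed

lemma card_row_switch:
  assumes "r1 \<noteq> r2" "c1 \<noteq> c2" "c1 < m" "c2 < m"
    and "B r1 c1" "B r2 c2" "\<not> B r1 c2" "\<not> B r2 c1"
  shows "card {j. j < m \<and> switch B r1 r2 c1 c2 i j} = card {j. j < m \<and> B i j}"
proof -
  let ?row = "{j. j < m \<and> B i j}"
  consider "i = r1" | "i = r2" | "i \<noteq> r1" "i \<noteq> r2" by blast
  then show ?thesis
  proof cases
    case 1
    then have "{j. j < m \<and> switch B r1 r2 c1 c2 i j} = insert c2 (?row - {c1})"
      using assms unfolding switch_def by auto
    then show ?thesis using 1 assms card_insert_Diff_swap[of ?row c1 c2] by simp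
  next
    case 2
    then have "{j. j < m \<and> switch B r1 r2 c1 c2 i j} = insert c1 (?row - {c2})"
      using assms unfolding switch_def by auto
    then show ?thesis using 2 assms card_insert_Diff_swap[of ?row c2 c1] by simp
  next
    case 3
    then show ?thesis unfolding switch_def by simp
  qed
qed

lemma card_column_switch:
  assumes "r1 \<noteq> r2" "c1 \<noteq> c2" "r1 < m" "r2 < m"
    and "B r1 c1" "B r2 c2" "\<not> B r1 c2" "\<not> B r2 c1"
  shows "card {i. i < m \<and> switch B r1 r2 c1 c2 i j} = card {i. i < m \<and> B i j}"
proof -
  have "card {i. i < m \<and> switch (\<lambda>x y. B y x) c1 c2 r1 r2 j i} = card {i. i < m \<and> B i j}"
    by (rule card_row_switch) (use assms in auto)
  then show ?thesis by (simp only: switch_transpose[of B c1 c2 r1 r2 j])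
qed

lemma realizes_switch:
  assumes R: "realizes B P Q" and sw: "r1 \<noteq> r2" "c1 \<noteq> c2" "B r1 c1" "B r2 c2" "\<not> B r1 c2" "\<not> B r2 c1"
  shows "realizes (switch B r1 r2 c1 c2) P Q"
proof -
  have bounds: "r1 < length P" "r2 < length P" "c1 < length Q" "c2 < length Q"
    using realizes_bounded[OF R] sw by blast+
  have "i < length P \<and> j < length Q" if "switch B r1 r2 c1 c2 i j" for i j
    using that realizes_bounded[OF R] bounds unfolding switch_def by (auto split: if_splits)
  moreover have "card {j. j < length Q \<and> switch B r1 r2 c1 c2 i j} = card {j. j < length Q \<and> B i j}" for i
    by (rule card_row_switch[OF sw(1,2) bounds(3,4) sw(3-6)])
  moreover have "card {i. i < length P \<and> switch B r1 r2 c1 c2 i j} = card {i. i < length P \<and> B i j}" for j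
    by (rule card_column_switch[OF sw(1,2) bounds(1,2) sw(3-6)])
  ultimately show ?thesis using R unfolding realizes_def by presburger
qed

definition asym_pairs :: "(nat \<Rightarrow> nat \<Rightarrow> bool) \<Rightarrow> nat \<Rightarrow> (nat \<times> nat) set" where
  "asym_pairs B n = {(x, y). x < n \<and> y < n \<and> B x y \<noteq> B y x}"

definition asym_arc :: "(nat \<Rightarrow> nat \<Rightarrow> bool) \<Rightarrow> nat \<Rightarrow> nat \<Rightarrow> bool" where
  "asym_arc B x y \<longleftrightarrow> B x y \<and> \<not> B y x"

lemma finite_asym_pairs: "finite (asym_pairs B n)"
  by (rule finite_subset[of _ "{..<n} \<times> {..<n}"]) (auto simp: asym_pairs_def)

lemma card_asym_pairs_less:
  assumes X: "X \<subseteq> asym_pairs B n" and Y: "finite Y" "card Y < card X"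
    and repaired: "\<And>x y. (x, y) \<in> X \<Longrightarrow> B' x y = B' y x"
    and unchanged: "\<And>x y. (x, y) \<notin> X \<union> Y \<Longrightarrow> x \<noteq> y \<Longrightarrow> B' x y = B x y"
    and sym: "\<And>x y. (x, y) \<in> X \<union> Y \<Longrightarrow> (y, x) \<in> X \<union> Y"
  shows "card (asym_pairs B' n) < card (asym_pairs B n)"
proof -
  have sub: "asym_pairs B' n - Y \<subseteq> asym_pairs B n - X"
  proof
    fix p assume p: "p \<in> asym_pairs B' n - Y"
    obtain x y where xy: "p = (x, y)" by (cases p)
    with p repaired have "(x, y) \<notin> X \<union> Y" unfolding asym_pairs_def by auto
    moreover from this sym have "(y, x) \<notin> X \<union> Y" by blast
    moreover have "x \<noteq> y" using p xy unfolding asym_pairs_def by auto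
    ultimately show "p \<in> asym_pairs B n - X"
      using p xy unchanged unfolding asym_pairs_def by auto
  qed
  have finX: "finite X" using X finite_asym_pairs by (rule finite_subset)
  have "card (asym_pairs B' n) \<le> card ((asym_pairs B' n - Y) \<union> Y)"
    by (rule card_mono) (auto simp: finite_asym_pairs Y)
  also have "\<dots> \<le> card (asym_pairs B' n - Y) + card Y"
    by (rule card_Un_le)
  also have "\<dots> \<le> card (asym_pairs B n - X) + card Y"
    using card_mono[OF _ sub] finite_asym_pairs by simp
  also have "\<dots> = card (asym_pairs B n) - card X + card Y"
    using X finX by (simp add: card_Diff_subset)
  also have "\<dots> < card (asym_pairs B n)"
    using Y card_mono[OF finite_asym_pairs X] by linarith
  finally show ?thesis .
qed

lemma triangle_reduces_asym_pairs:
  assumes R: "realizes B P P" and arcs: "asym_arc B i j" "asym_arc B j k" "asym_arc B k i"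
  shows "\<exists>B'. realizes B' P P \<and> card (asym_pairs B' (length P)) < card (asym_pairs B (length P))"
proof -
  have edges: "B i j" "\<not> B j i" "B j k" "\<not> B k j" "B k i" "\<not> B i k"
    using arcs unfolding asym_arc_def by auto
  then have distinct: "i \<noteq> j" "j \<noteq> k" "i \<noteq> k" by auto
  let ?X = "{(i,j), (j,i), (j,k), (k,j), (k,i), (i,k)}"
  have X: "?X \<subseteq> asym_pairs B (length P)"
    using edges realizes_bounded[OF R] unfolding asym_pairs_def by blast
  have cX: "card ?X = 6" using distinct by auto
  text \<open>Which switch works depends on whether \<open>j\<close> carries a loop.\<close>
  show ?thesis
  proof (cases "B j j")
    case False
    have "realizes (switch B i j j k) P P" by (rule realizes_switch[OF R]) (use distinct edges False in auto)
    moreover have "card (asym_pairs (switch B i j j k) (length P)) < card (asym_pairs B (length P))"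
      by (rule card_asym_pairs_less[OF X, of "{}"]) (use distinct edges False cX in \<open>auto simp: switch_def\<close>)
    ultimately show ?thesis by blast
  next
    case True
    have "realizes (switch B j k j i) P P" by (rule realizes_switch[OF R]) (use distinct edges True in auto)
    moreover have "card (asym_pairs (switch B j k j i) (length P)) < card (asym_pairs B (length P))"
      by (rule card_asym_pairs_less[OF X, of "{}"]) (use distinct edges True cX in \<open>auto simp: switch_def\<close>)
    ultimately show ?thesis by blast
  qed
qed

lemma open_path_reduces_asym_pairs:
  assumes R: "realizes B P P"
    and arcs: "asym_arc B a b" "asym_arc B b c" "asym_arc B c d" "\<not> asym_arc B a d"
    and "a \<noteq> d"
  shows "\<exists>B'. realizes B' P P \<and> card (asym_pairs B' (length P)) < card (asym_pairs B (length P))"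
proof -
  have edges: "B a b" "\<not> B b a" "B b c" "\<not> B c b" "B c d" "\<not> B d c" "\<not> B a d \<or> B d a"
    using arcs unfolding asym_arc_def by auto
  then have distinct: "a \<noteq> b" "a \<noteq> c" "a \<noteq> d" "b \<noteq> c" "b \<noteq> d" "c \<noteq> d"
    using \<open>a \<noteq> d\<close> by auto
  let ?X = "{(a,b), (b,a), (b,c), (c,b), (c,d), (d,c)}"
  let ?Y = "{(a,d), (d,a)}"
  have X: "?X \<subseteq> asym_pairs B (length P)"
    using edges realizes_bounded[OF R] unfolding asym_pairs_def by blast
  have card: "card ?Y < card ?X" using distinct by (simp add: card_insert_if)
  show ?thesis
  proof (cases "B d a")
    case True
    have "realizes (switch B b d c a) P P" by (rule realizes_switch[OF R]) (use distinct edges True in auto)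
    moreover have "card (asym_pairs (switch B b d c a) (length P)) < card (asym_pairs B (length P))"
      by (rule card_asym_pairs_less[OF X _ card]) (use distinct edges True in \<open>auto simp: switch_def\<close>)
    ultimately show ?thesis by blast
  next
    case False
    then have "\<not> B a d" using edges by blast
    have "realizes (switch B a c b d) P P"
      by (rule realizes_switch[OF R]) (use distinct edges False \<open>\<not> B a d\<close> in auto)
    moreover have "card (asym_pairs (switch B a c b d) (length P)) < card (asym_pairs B (length P))"
      by (rule card_asym_pairs_less[OF X _ card]) (use distinct edges False \<open>\<not> B a d\<close> in \<open>auto simp: switch_def\<close>)
    ultimately show ?thesis by blast
  qed
qed

text \<open>The row and column sums at \<open>v\<close> agree and the symmetric neighbours of \<open>v\<close> count in both,
  so \<open>v\<close> has as many outgoing as incoming arcs.\<close>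

lemma asym_arc_continues:
  assumes R: "realizes B P P" and uv: "asym_arc B u v"
  shows "\<exists>w. asym_arc B v w"
proof (rule ccontr)
  assume "\<nexists>w. asym_arc B v w"
  let ?out = "{j. j < length P \<and> B v j}" and ?in = "{i. i < length P \<and> B i v}"
  have "v < length P" and "u < length P"
    using uv realizes_bounded[OF R] unfolding asym_arc_def by blast+
  then have "card ?out = card ?in" using R unfolding realizes_def by simp
  moreover have "?out \<subset> ?in"
    using \<open>\<nexists>w. asym_arc B v w\<close> uv \<open>u < length P\<close> unfolding asym_arc_def by blast
  ultimately show False using psubset_card_mono[of ?in ?out] by simp
qed

subsection \<open>Relations closed under paths of length three\<close>

lemma asym_path3_closed_relation_empty:
  assumes "finite V" and src: "\<And>x y. R x y \<Longrightarrow> x \<in> V"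
    and asym: "\<And>x y. R x y \<Longrightarrow> \<not> R y x"
    and continues: "\<And>x y. R x y \<Longrightarrow> \<exists>z. R y z"
    and closed: "\<And>a b c d. R a b \<Longrightarrow> R b c \<Longrightarrow> R c d \<Longrightarrow> R a d"
  shows "\<not> R x y"
proof
  assume "R x y"
  define f where "f v = (SOME w. R v w)" for v
  have f: "R v (f v)" if "\<exists>w. R v w" for v
    unfolding f_def using that by (rule someI_ex)
  define s where "s m = (f ^^ m) x" for m
  have s_Suc: "s (Suc m) = f (s m)" for m by (simp add: s_def)
  have step: "R (s m) (s (Suc m))" for m
  proof (induction m)
    case 0
    show ?case unfolding s_Suc by (rule f) (use \<open>R x y\<close> in \<open>auto simp: s_def\<close>)
  next
    case (Suc m)
    show ?case unfolding s_Suc[of "Suc m"] by (rule f[OF continues[OF Suc.IH]])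
  qed
  have odd_walk: "R (s t) (s (t + 2 * m + 1))" for t m
  proof (induction m arbitrary: t)
    case 0
    show ?case using step[of t] by simp
  next
    case (Suc m)
    have "R (s t) (s (Suc (Suc t) + 2 * m + 1))"
      by (rule closed[OF step[of t] step[of "Suc t"] Suc.IH])
    moreover have "Suc (Suc t) + 2 * m + 1 = t + 2 * Suc m + 1" by simp
    ultimately show ?case by simp
  qed
  have "finite (range s)" using src step \<open>finite V\<close> by (meson finite_subset image_subsetI)
  then have "\<not> inj s" using finite_imageD infinite_UNIV_nat by blast
  then obtain a b where "a \<noteq> b" "s a = s b" unfolding inj_def by blast
  then obtain p q where "p < q" "s p = s q" by (metis linorder_neqE_nat)
  define d where "d = q - p"
  have shift: "s (p + t) = s (q + t)" for t
    by (induction t) (simp_all add: \<open>s p = s q\<close> s_Suc)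
  text \<open>Going twice around the closed walk of length \<open>d\<close> through \<open>s p\<close> gives a walk of odd
    length \<open>2 d - 1\<close> from \<open>s (p + 1)\<close> back to \<open>s p\<close>.\<close>
  have "p + d = q" and idx: "p + 2 * d = q + d" using \<open>p < q\<close> by (simp_all add: d_def)
  then have "s (p + 2 * d) = s (q + d)" by (simp only: idx)
  also have "\<dots> = s (p + d)" by (rule shift[symmetric])
  also have "\<dots> = s p" using \<open>p + d = q\<close> \<open>s p = s q\<close> by simp
  finally have periodic: "s (p + 2 * d) = s p" .
  have odd_length: "p + 1 + 2 * (d - 1) + 1 = p + 2 * d" using \<open>p < q\<close> by (simp add: d_def)
  have "R (s (p + 1)) (s (p + 1 + 2 * (d - 1) + 1))" by (rule odd_walk)
  then have "R (s (p + 1)) (s p)" by (simp only: odd_length periodic)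
  then show False using asym step[of p] by simp
qed

lemma realizes_min_asym_pairs_symmetric:
  assumes R: "realizes B P P"
    and min: "\<And>B'. realizes B' P P \<Longrightarrow> card (asym_pairs B (length P)) \<le> card (asym_pairs B' (length P))"
  shows "B x y = B y x"
proof -
  have irreducible: "\<nexists>B'. realizes B' P P \<and> card (asym_pairs B' (length P)) < card (asym_pairs B (length P))"
    using min by (meson not_less)
  have asym: "\<not> asym_arc B y x" if "asym_arc B x y" for x y
    using that unfolding asym_arc_def by blast
  have no_triangle: "\<not> (asym_arc B a b \<and> asym_arc B b c \<and> asym_arc B c a)" for a b c
    using triangle_reduces_asym_pairs[OF R] irreducible by blast
  have closed: "asym_arc B a d" if "asym_arc B a b" "asym_arc B b c" "asym_arc B c d" for a b c d
    using that open_path_reduces_asym_pairs[OF R that] no_triangle irreducible by blast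
  have "\<not> asym_arc B u v" for u v
  proof (rule asym_path3_closed_relation_empty[of "{..<length P}"])
    show "\<And>x y. asym_arc B x y \<Longrightarrow> x \<in> {..<length P}"
      using realizes_bounded[OF R] unfolding asym_arc_def by blast
  qed (use asym closed asym_arc_continues[OF R] in blast)+
  then show ?thesis unfolding asym_arc_def by blast
qed

lemma bigraphic_self_symmetric_realization:
  assumes "bigraphic P P"
  obtains B where "realizes B P P" "\<And>x y. B x y = B y x"
proof -
  obtain B0 where "realizes B0 P P" using assms unfolding bigraphic_def by blast
  then obtain B where "realizes B P P"
    and "\<And>B'. realizes B' P P \<Longrightarrow> card (asym_pairs B (length P)) \<le> card (asym_pairs B' (length P))"
    using ex_has_least_nat[of "\<lambda>B. realizes B P P" B0 "\<lambda>B. card (asym_pairs B (length P))"] by blast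
  then show ?thesis using that realizes_min_asym_pairs_symmetric by blast
qed

lemma mirror_if_symmetric: "(\<And>x y. B x y = B y x) \<Longrightarrow> mirror n n B"
  unfolding mirror_def by (intro exI[of _ id]) simp

theorem theorem3:
  fixes P :: "nat list"
  shows "(loop_graphic P \<longleftrightarrow> bigraphic P P) \<and> (bigraphic P P \<longleftrightarrow> mirror_bigraphic P)"
proof -
  have "bigraphic P P \<longleftrightarrow> (\<exists>B. realizes B P P \<and> (\<forall>x y. B x y = B y x))"
    using bigraphic_self_symmetric_realization unfolding bigraphic_def by metis
  then show ?thesis
    unfolding loop_graphic_iff_symmetric_realization mirror_bigraphic_def
    using mirror_if_symmetric by metis
qed

end
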